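(* Let $\Gamma$ be a gain operator on $\ell^\infty_+(\mathcal I)$ with $|\mathcal I|<\infty$. Then $\Gamma$ satisfies the NJI condition if and only if $\Gamma$ satisfies the uniform NJI condition.
   Context: Let $\mathcal I$ be a nonempty countable index set; $\ell^\infty_+(\mathcal I)$ is the cone of nonnegative real families $s=(s_i)_{i\in\mathcal I}$ with $\|s\|:=\sup_i|s_i|<\infty$; $s^1\le s^2$ means componentwise; $s>0$ means $s\ge0$, $s\ne0$; $\Gamma(s)\not\ge s$ means it is not the case that $\Gamma(s)\ge s$. $\mathcal K_\infty$: continuous strictly increasing unbounded $\gamma:\mathbb R_+\to\mathbb R_+$ with $\gamma(0)=0$. For $\mathcal J\subset\mathcal I$, $s_{|\mathcal J}$ agrees with $s$ on $\mathcal J$ and is $0$ elsewhere. Gain operator: for each $i$ a finite (possibly empty) $\mathcal I_i\subset\mathcal I\setminus\{i\}$; directed graph $\mathcal G$ with vertices $\mathcal I$ and edges $ji$, $j\in\mathcal I_i$; a pointwise equicontinuous family $\gamma_{ij}\in\mathcal K_\infty$ ($ji\in E(\mathcal G)$); functions $\mu_i:\ell^\infty_+(\mathcal I)\to[0,\infty]$ with (M1) some $\xi\in\mathcal K_\infty$ has $\mu_i(0)=0$, $\mu_i(s)\ge\xi(\|s\|)$ for all $i,s$; (M2) $\mu_i$ monotone; (M3) for each finite $\mathcal J$, $\mu_i$ restricted to vectors vanishing off $\mathcal J$ is finite-valued and continuous; (M4) for each norm-bounded $A$ and $\varepsilon>0$ there is $\delta>0$ with $\sup_i|\mu_i(s_{|\mathcal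 I_i})-\mu_i(s^0_{|\mathcal I_i})|\le\varepsilon$ whenever $s^0\in A$, $\|s-s^0\|\le\delta$. $\Gamma_i(s):=\mu_i([\gamma_{ij}(s_j)]_{j\in\mathcal I_i})$ (argument zero outside $\mathcal I_i$). $\mathcal N^-_i(n)$ is the set of vertices $j$ from which there is a directed path to $i$ of length at most $n$ ($\mathcal N^-_i(0)=\{i\}$). NJI condition: $\Gamma(s)\not\ge s$ for all $s>0$. Uniform NJI condition: for all $r,\varepsilon>0$ there are $n\in\mathbb N$ and $\delta>0$ such that for all $s\in\ell^\infty_+(\mathcal I)$ and $i\in\mathcal I$ with $s_i\ge\varepsilon$ and $\|s\|\le r$ there is $j\in\mathcal N^-_i(n)$ with $s_j\ge\delta$ and $\Gamma_j(s)<s_j$. *)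

theory Defs
  imports "HOL-Analysis.Analysis" "HOL-Library.Extended_Nonnegative_Real"
begin

text \<open>The finite index set is modelled by a finite type 'i (nonempty and countable automatically).
 Gain-operator values lie in [0,\<infinity>], modelled by ennreal.\<close>

definition Kinf :: "(real \<Rightarrow> real) \<Rightarrow> bool" where
  "Kinf g \<longleftrightarrow> continuous_on {0..} g \<and> strict_mono_on {0..} g \<and> g 0 = 0
     \<and> \<not> bdd_above (g ` {0..})"

definition cone :: "('i::finite \<Rightarrow> real) set" where
  "cone = {s. \<forall>i. 0 \<le> s i}"

definition supnorm :: "('i::finite \<Rightarrow> real) \<Rightarrow> real" where
  "supnorm s = (SUP i. \<bar>s i\<bar>)"

definition restr :: "'i set \<Rightarrow> ('i \<Rightarrow> real) \<Rightarrow> ('i \<Rightarrow> real)" where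
  "restr J s = (\<lambda>i. if i \<in> J then s i else 0)"

definition gain_op :: "('i \<Rightarrow> 'i set) \<Rightarrow> ('i \<Rightarrow> 'i \<Rightarrow> real \<Rightarrow> real)
     \<Rightarrow> ('i \<Rightarrow> ('i \<Rightarrow> real) \<Rightarrow> ennreal) \<Rightarrow> 'i \<Rightarrow> ('i \<Rightarrow> real) \<Rightarrow> ennreal" where
  "gain_op II gam mu i s = mu i (\<lambda>j. if j \<in> II i then gam i j (s j) else 0)"

text \<open>Gain operator hypotheses. gam i j is gamma_ij, used for the edge j -> i, j in II i.\<close>
definition is_gain_operator :: "('i::finite \<Rightarrow> 'i set) \<Rightarrow> ('i \<Rightarrow> 'i \<Rightarrow> real \<Rightarrow> real)
     \<Rightarrow> ('i \<Rightarrow> ('i \<Rightarrow> real) \<Rightarrow> ennreal) \<Rightarrow> bool" where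
  "is_gain_operator II gam mu \<longleftrightarrow>
     (\<forall>i. finite (II i) \<and> i \<notin> II i)
   \<and> (\<forall>i j. j \<in> II i \<longrightarrow> Kinf (gam i j))
   \<and> (\<forall>t\<ge>0. \<forall>e>0. \<exists>d>0. \<forall>i j r. j \<in> II i \<and> 0 \<le> r \<and> \<bar>r - t\<bar> < d
         \<longrightarrow> \<bar>gam i j r - gam i j t\<bar> < e)
   \<and> (\<exists>xi. Kinf xi \<and> (\<forall>i. mu i (\<lambda>_. 0) = 0 \<and>
         (\<forall>s\<in>cone. ennreal (xi (supnorm s)) \<le> mu i s)))
   \<and> (\<forall>i. \<forall>s1\<in>cone. \<forall>s2\<in>cone. s1 \<le> s2 \<longrightarrow> mu i s1 \<le> mu i s2)
   \<and> (\<forall>i J. finite J \<longrightarrow>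
         (\<forall>s\<in>cone. (\<forall>k. k \<notin> J \<longrightarrow> s k = 0) \<longrightarrow> mu i s < \<infinity>)
       \<and> continuous_on {s\<in>cone. \<forall>k. k \<notin> J \<longrightarrow> s k = 0} (mu i))
   \<and> (\<forall>A. A \<subseteq> cone \<and> (\<exists>B. \<forall>s\<in>A. supnorm s \<le> B) \<longrightarrow>
       (\<forall>e>0. \<exists>d>0. \<forall>s0\<in>A. \<forall>s\<in>cone. supnorm (\<lambda>k. s k - s0 k) \<le> d \<longrightarrow>
          (SUP i. \<bar>enn2real (mu i (restr (II i) s)) - enn2real (mu i (restr (II i) s0))\<bar>) \<le> e))"

text \<open>In-neighbourhood: vertices with a directed path of length at most n to i
 (edges j -> k for j in II k).\<close>
primrec in_nbhd :: "('i \<Rightarrow> 'i set) \<Rightarrow> 'i \<Rightarrow> nat \<Rightarrow> 'i set" where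
  "in_nbhd II i 0 = {i}"
| "in_nbhd II i (Suc n) = in_nbhd II i n \<union> {j. \<exists>k\<in>in_nbhd II i n. j \<in> II k}"

definition NJI :: "('i::finite \<Rightarrow> ('i \<Rightarrow> real) \<Rightarrow> ennreal) \<Rightarrow> bool" where
  "NJI G \<longleftrightarrow> (\<forall>s\<in>cone. s \<noteq> (\<lambda>_. 0) \<longrightarrow> \<not> (\<forall>i. ennreal (s i) \<le> G i s))"

definition uniform_NJI :: "('i::finite \<Rightarrow> 'i set) \<Rightarrow> ('i \<Rightarrow> ('i \<Rightarrow> real) \<Rightarrow> ennreal) \<Rightarrow> bool" where
  "uniform_NJI II G \<longleftrightarrow> (\<forall>r>0. \<forall>e>0. \<exists>n::nat. \<exists>d>0. \<forall>s\<in>cone. \<forall>i.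
      e \<le> s i \<and> supnorm s \<le> r \<longrightarrow>
      (\<exists>j\<in>in_nbhd II i n. d \<le> s j \<and> G j s < ennreal (s j)))"

end

theory Submission imports Defs begin

text \<open>The uniform condition trivially implies NJI. Conversely, since the graph is finite, for
  some radius n every neighbourhood N = in_nbhd II i n is closed under taking predecessors, so
  the components Gamma_j with j in N only see coordinates in N. If the uniform condition failed
  at i, there would be vectors s_k in the box [0,r]^I with s_k(i) >= e and s_k(j) <= Gamma_j(s_k)
  whenever j in N and s_k(j) >= 1/(k+1). By compactness a subsequence converges to some l, and
  continuity of Gamma gives l(j) <= Gamma_j(l) for all j in N with l(j) > 0. Cutting l off
  outside N does not change these Gamma_j, so the cut-off vector is a nonzero s with
  Gamma(s) >= s, contradicting NJI.\<close>

lemma abs_le_supnorm: "\<bar>s j\<bar> \<le> supnorm (s::'i::finite \<Rightarrow> real)"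
  unfolding supnorm_def by (rule cSUP_upper) (auto intro: bdd_above_finite)

lemma compact_fun_box: "compact {s::'i::finite \<Rightarrow> real. \<forall>j. s j \<in> {0..r}}"
proof -
  have "compactin (product_topology (\<lambda>_. euclidean) UNIV) (PiE UNIV (\<lambda>_::'i. {0..r::real}))"
    by (simp add: compactin_PiE)
  moreover have "PiE UNIV (\<lambda>_::'i. {0..r::real}) = {s. \<forall>j. s j \<in> {0..r}}"
    by auto
  ultimately show ?thesis
    by (simp add: euclidean_product_topology)
qed

lemma in_nbhd_self: "i \<in> in_nbhd II i n"
  by (induction n) auto

lemma mono_in_nbhd: "mono (in_nbhd II i)"
  unfolding mono_iff_le_Suc by auto

lemma in_nbhd_stabilises: "\<exists>N. \<forall>n\<ge>N. in_nbhd II (i::'i::finite) n = in_nbhd II i N"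
proof -
  have "\<exists>N. (\<forall>n\<le>N. \<forall>m\<le>N. m < n \<longrightarrow> in_nbhd II i m < in_nbhd II i n)
      \<and> (\<forall>n\<ge>N. in_nbhd II i N = in_nbhd II i n)"
    by (rule finite_mono_remains_stable_implies_strict_prefix) (auto simp: mono_in_nbhd)
  then show ?thesis
    by metis
qed

lemma in_nbhd_closed_under_predecessors:
  obtains n where "\<And>i j. j \<in> in_nbhd II (i::'i::finite) n \<Longrightarrow> II j \<subseteq> in_nbhd II i n"
proof -
  obtain N where N: "\<And>i n. n \<ge> N i \<Longrightarrow> in_nbhd II i n = in_nbhd II i (N i)"
    using in_nbhd_stabilises by metis
  define n where "n = Max (range N)"
  have "N i \<le> n" for i
    by (simp add: n_def)
  then have stable: "in_nbhd II i (Suc n) = in_nbhd II i n" for i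
    using N[of i n] N[of i "Suc n"] le_SucI by presburger
  have "II j \<subseteq> in_nbhd II i n" if "j \<in> in_nbhd II i n" for i j
  proof -
    have "II j \<subseteq> in_nbhd II i (Suc n)"
      using that by auto
    then show ?thesis
      by (simp only: stable)
  qed
  then show thesis
    by (rule that)
qed

lemma Kinf_nonneg:
  assumes "Kinf g" "0 \<le> x"
  shows "0 \<le> g x"
  using assms strict_mono_onD[of "{0..}" g 0 x] unfolding Kinf_def
  by (cases "x = 0") fastforce+

lemma continuous_on_mu_of_gain_operator:
  fixes II :: "'i::finite \<Rightarrow> 'i set"
  assumes "is_gain_operator II gam mu"
  shows "continuous_on cone (mu i)"
proof -
  have "finite J \<Longrightarrow> continuous_on {s \<in> cone. \<forall>k. k \<notin> J \<longrightarrow> s k = 0} (mu i)" for J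
    using assms by (simp add: is_gain_operator_def)
  from this[of UNIV] show ?thesis
    by simp
qed

lemma continuous_on_gain_op:
  fixes II :: "'i::finite \<Rightarrow> 'i set"
  assumes "is_gain_operator II gam mu"
  shows "continuous_on cone (gain_op II gam mu j)"
proof -
  define phi where "phi s = (\<lambda>k. if k \<in> II j then gam j k (s k) else 0)" for s :: "'i \<Rightarrow> real"
  have Kinf: "\<And>k. k \<in> II j \<Longrightarrow> Kinf (gam j k)"
    using assms by (simp add: is_gain_operator_def)
  have phi_cont: "continuous_on cone phi"
    unfolding phi_def
  proof (rule continuous_on_coordinatewise_then_product)
    fix k
    show "continuous_on cone (\<lambda>s. if k \<in> II j then gam j k (s k) else 0)"
    proof (cases "k \<in> II j")
      case True
      have "continuous_on {0..} (gam j k)"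
        using Kinf[OF True] by (simp add: Kinf_def)
      moreover have "continuous_on cone (\<lambda>s::'i \<Rightarrow> real. s k)"
        by (rule continuous_on_subset[OF continuous_on_product_coordinates]) auto
      ultimately have "continuous_on cone (\<lambda>s. gam j k (s k))"
        by (rule continuous_on_compose2) (auto simp: cone_def)
      then show ?thesis
        using True by simp
    qed simp
  qed
  have "phi ` cone \<subseteq> cone"
    using Kinf Kinf_nonneg by (auto simp: phi_def cone_def)
  then have "continuous_on cone (mu j \<circ> phi)"
    by (intro continuous_on_compose phi_cont continuous_on_subset[OF continuous_on_mu_of_gain_operator[OF assms]])
  moreover have "gain_op II gam mu j = mu j \<circ> phi"
    by (auto simp: gain_op_def phi_def)
  ultimately show ?thesis
    by simp
qed

lemma gain_op_restr:
  assumes "II j \<subseteq> N"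
  shows "gain_op II gam mu j (restr N s) = gain_op II gam mu j s"
proof -
  have "(\<lambda>k. if k \<in> II j then gam j k (restr N s k) else 0)
      = (\<lambda>k. if k \<in> II j then gam j k (s k) else 0)"
    using assms by (auto simp: restr_def fun_eq_iff)
  then show ?thesis
    by (simp add: gain_op_def)
qed

lemma uniform_NJI_imp_NJI:
  fixes G :: "'i::finite \<Rightarrow> ('i \<Rightarrow> real) \<Rightarrow> ennreal"
  assumes "uniform_NJI II G"
  shows "NJI G"
  unfolding NJI_def
proof (intro ballI impI notI)
  fix s :: "'i \<Rightarrow> real"
  assume s: "s \<in> cone" "s \<noteq> (\<lambda>_. 0)" and sub: "\<forall>i. ennreal (s i) \<le> G i s"
  obtain i where "s i \<noteq> 0"
    using s(2) by auto
  with s(1) have "0 < s i"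
    by (auto simp: cone_def less_le)
  moreover have "0 < supnorm s + 1"
    using abs_le_supnorm[of s i] by linarith
  ultimately obtain n d where
    "\<forall>s'\<in>cone. \<forall>i'. s i \<le> s' i' \<and> supnorm s' \<le> supnorm s + 1 \<longrightarrow>
      (\<exists>j\<in>in_nbhd II i' n. d \<le> s' j \<and> G j s' < ennreal (s' j))"
    using assms unfolding uniform_NJI_def by meson
  then obtain j where "G j s < ennreal (s j)"
    using s(1) by fastforce
  with sub show False
    by (simp add: not_le[symmetric])
qed

lemma ennreal_coordinate_le_at_limit:
  fixes g :: "('i::finite \<Rightarrow> real) \<Rightarrow> ennreal"
  assumes g: "continuous_on cone g" and S: "\<And>k. S k \<in> cone" and lim: "S \<longlonglongrightarrow> l"
    and l: "l \<in> cone" and \<delta>: "\<delta> \<longlonglongrightarrow> 0" and pos: "0 < l j"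
    and sub: "\<And>k. \<delta> k \<le> S k j \<Longrightarrow> ennreal (S k j) \<le> g (S k)"
  shows "ennreal (l j) \<le> g l"
proof (rule tendsto_le[OF sequentially_bot])
  show "(\<lambda>k. g (S k)) \<longlonglongrightarrow> g l"
    using continuous_on_tendsto_compose[OF g lim l] S by simp
  have lim_j: "(\<lambda>k. S k j) \<longlonglongrightarrow> l j"
    using continuous_on_tendsto_compose[OF continuous_on_product_coordinates lim] by simp
  then show "(\<lambda>k. ennreal (S k j)) \<longlonglongrightarrow> ennreal (l j)"
    by (rule tendsto_ennrealI)
  have "\<forall>\<^sub>F k in sequentially. l j / 2 < S k j" "\<forall>\<^sub>F k in sequentially. \<delta> k < l j / 2"
    using order_tendstoD[OF lim_j, of "l j / 2"] order_tendstoD[OF \<delta>, of "l j / 2"] pos by auto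
  then show "\<forall>\<^sub>F k in sequentially. ennreal (S k j) \<le> g (S k)"
    by eventually_elim (auto intro: sub)
qed

lemma NJI_imp_decrease_on_support:
  fixes G :: "'i::finite \<Rightarrow> ('i \<Rightarrow> real) \<Rightarrow> ennreal"
  assumes NJI: "NJI G" and local: "\<And>j s. j \<in> N \<Longrightarrow> G j (restr N s) = G j s"
    and l: "l \<in> cone" and "i \<in> N" and "0 < l i"
  shows "\<exists>j\<in>N. 0 < l j \<and> G j l < ennreal (l j)"
proof (rule ccontr)
  assume "\<not> ?thesis"
  then have active: "ennreal (l j) \<le> G j l" if "j \<in> N" "0 < l j" for j
    using that by (meson not_less)
  define l' where "l' = restr N l"
  have "ennreal (l' j) \<le> G j l'" for j
  proof (cases "j \<in> N \<and> 0 < l j")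
    case True
    then show ?thesis
      using active local[of j l] by (simp add: l'_def restr_def)
  next
    case False
    then have "l' j = 0"
      using l by (auto simp: l'_def restr_def cone_def less_le)
    then show ?thesis
      by simp
  qed
  moreover have "l' \<in> cone" "l' i \<noteq> 0"
    using l \<open>i \<in> N\<close> \<open>0 < l i\<close> by (auto simp: l'_def restr_def cone_def)
  ultimately show False
    using NJI unfolding NJI_def by fastforce
qed

lemma NJI_imp_local_decrease:
  fixes G :: "'i::finite \<Rightarrow> ('i \<Rightarrow> real) \<Rightarrow> ennreal"
  assumes NJI: "NJI G" and cont: "\<And>j. continuous_on cone (G j)"
    and local: "\<And>j s. j \<in> N \<Longrightarrow> G j (restr N s) = G j s"
    and "i \<in> N" and "0 < e"
  shows "\<exists>d>0. \<forall>s\<in>cone. e \<le> s i \<and> supnorm s \<le> r \<longrightarrow>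
           (\<exists>j\<in>N. d \<le> s j \<and> G j s < ennreal (s j))"
proof (rule ccontr)
  assume "\<not> ?thesis"
  then have "\<exists>s. s \<in> cone \<and> e \<le> s i \<and> supnorm s \<le> r \<and>
               (\<forall>j\<in>N. d \<le> s j \<longrightarrow> ennreal (s j) \<le> G j s)" if "0 < d" for d
    using that by (simp add: not_less) (meson not_le)
  then have "\<exists>s. s \<in> cone \<and> e \<le> s i \<and> supnorm s \<le> r \<and>
               (\<forall>j\<in>N. 1 / Suc k \<le> s j \<longrightarrow> ennreal (s j) \<le> G j s)" for k
    by simp
  then obtain S where S: "\<And>k. S k \<in> cone" "\<And>k. e \<le> S k i" "\<And>k. supnorm (S k) \<le> r"
    and sub: "\<And>k j. j \<in> N \<Longrightarrow> 1 / Suc k \<le> S k j \<Longrightarrow> ennreal (S k j) \<le> G j (S k)"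
    by metis
  have "S k j \<le> r" for k j
    using S(3)[of k] abs_le_supnorm[of "S k" j] by linarith
  then have box: "S k \<in> {s. \<forall>j. s j \<in> {0..r}}" for k
    using S(1)[of k] by (simp add: cone_def)
  obtain l \<sigma> where l: "l \<in> {s. \<forall>j. s j \<in> {0..r}}" and "strict_mono \<sigma>"
    and lim: "(S \<circ> \<sigma>) \<longlonglongrightarrow> l"
    by (rule seq_compactE[OF compact_imp_seq_compact[OF compact_fun_box] allI[OF box]])
  have l_cone: "l \<in> cone"
    using l by (simp add: cone_def)
  have "(\<lambda>k. S (\<sigma> k) i) \<longlonglongrightarrow> l i"
    using continuous_on_tendsto_compose[OF continuous_on_product_coordinates lim] by simp
  then have "e \<le> l i"
    using S(2) by (intro LIMSEQ_le_const) auto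
  have "(\<lambda>k. 1 / real (Suc k)) \<longlonglongrightarrow> 0"
    using LIMSEQ_inverse_real_of_nat by (simp add: inverse_eq_divide)
  then have \<delta>: "(\<lambda>k. 1 / real (Suc (\<sigma> k))) \<longlonglongrightarrow> 0"
    using LIMSEQ_subseq_LIMSEQ[OF _ \<open>strict_mono \<sigma>\<close>] by (simp add: o_def)
  have "0 < l i"
    using \<open>0 < e\<close> \<open>e \<le> l i\<close> by linarith
  then obtain j where "j \<in> N" "0 < l j" "G j l < ennreal (l j)"
    using NJI_imp_decrease_on_support[of G N, OF NJI local l_cone \<open>i \<in> N\<close>] by blast
  moreover have "ennreal (l j) \<le> G j l"
    using ennreal_coordinate_le_at_limit[OF cont _ lim l_cone \<delta> \<open>0 < l j\<close>] S(1) sub[OF \<open>j \<in> N\<close>]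
    by simp
  ultimately show False
    by simp
qed

lemma NJI_imp_uniform_NJI:
  fixes G :: "'i::finite \<Rightarrow> ('i \<Rightarrow> real) \<Rightarrow> ennreal"
  assumes NJI: "NJI G" and cont: "\<And>j. continuous_on cone (G j)"
    and local: "\<And>j N s. II j \<subseteq> N \<Longrightarrow> G j (restr N s) = G j s"
  shows "uniform_NJI II G"
  unfolding uniform_NJI_def
proof (intro allI impI)
  fix r e :: real
  assume "0 < e"
  obtain n where closed: "\<And>i j. j \<in> in_nbhd II i n \<Longrightarrow> II j \<subseteq> in_nbhd II i n"
    using in_nbhd_closed_under_predecessors[of II] by metis
  have "\<exists>d>0. \<forall>s\<in>cone. e \<le> s i \<and> supnorm s \<le> r \<longrightarrow>
           (\<exists>j\<in>in_nbhd II i n. d \<le> s j \<and> G j s < ennreal (s j))" for i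
  proof -
    have "G j (restr (in_nbhd II i n) s) = G j s" if "j \<in> in_nbhd II i n" for j s
      by (rule local[OF closed[OF that]])
    then show ?thesis
      by (rule NJI_imp_local_decrease[of G "in_nbhd II i n", OF NJI cont _ in_nbhd_self \<open>0 < e\<close>])
  qed
  then obtain D where D: "\<And>i. 0 < D i"
    and decrease: "\<And>i s. s \<in> cone \<Longrightarrow> e \<le> s i \<Longrightarrow> supnorm s \<le> r \<Longrightarrow>
           \<exists>j\<in>in_nbhd II i n. D i \<le> s j \<and> G j s < ennreal (s j)"
    by metis
  show "\<exists>n d. 0 < d \<and> (\<forall>s\<in>cone. \<forall>i. e \<le> s i \<and> supnorm s \<le> r \<longrightarrow>
               (\<exists>j\<in>in_nbhd II i n. d \<le> s j \<and> G j s < ennreal (s j)))"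
  proof (intro exI[of _ n] exI[of _ "Min (range D)"] conjI ballI allI impI)
    show "0 < Min (range D)"
      using D by simp
    fix s :: "'i \<Rightarrow> real" and i :: 'i
    assume "s \<in> cone" "e \<le> s i \<and> supnorm s \<le> r"
    then obtain j where "j \<in> in_nbhd II i n" "D i \<le> s j" "G j s < ennreal (s j)"
      using decrease by blast
    moreover have "Min (range D) \<le> D i"
      by simp
    ultimately show "\<exists>j\<in>in_nbhd II i n. Min (range D) \<le> s j \<and> G j s < ennreal (s j)"
      by (blast intro: order_trans)
  qed
qed

theorem proposition2p18:
  fixes II :: "'i::finite \<Rightarrow> 'i set"
    and gam :: "'i \<Rightarrow> 'i \<Rightarrow> real \<Rightarrow> real"
    and mu :: "'i \<Rightarrow> ('i \<Rightarrow> real) \<Rightarrow> ennreal"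
  assumes "is_gain_operator II gam mu"
  shows "NJI (gain_op II gam mu) \<longleftrightarrow> uniform_NJI II (gain_op II gam mu)"
proof
  assume "NJI (gain_op II gam mu)"
  then show "uniform_NJI II (gain_op II gam mu)"
    using continuous_on_gain_op[OF assms] gain_op_restr
    by (rule NJI_imp_uniform_NJI[where G = "gain_op II gam mu"])
qed (rule uniform_NJI_imp_NJI)

end
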